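(* Let $f\in L^2(\Omega)$ and let $p_h\in E_h(\Omega)$ satisfy $a_h(p_h,w_h)=(f,w_h)_{L^2(\Omega)}$ for all $w_h\in E_h(\Omega)$. Let $\mathbf u_h$ be the function in the lowest-order Raviart–Thomas space on $\mathcal T_h$ whose degrees of freedom are $$\mathbf u_h\cdot\mathbf n_e:=\frac1{|e|}\int_e\Big(-\{\beta\nabla p_h\cdot\mathbf n_e\}+\frac{\sigma(\beta)}{|e|}[p_h]\cdot\mathbf n_e\Big)\,ds,\qquad e\in\mathcal E_h.$$ Then $\mathbf u_h$ is locally and globally conservative: $$\int_{\partial T}\mathbf u_h\cdot\mathbf n\,ds=\int_T f\,dx\quad\forall T\in\mathcal T_h,\qquad \int_{\partial\Omega}\mathbf u_h\cdot\mathbf n\,ds=\int_\Omega f\,dx,$$ where $\mathbf n$ denotes the unit outward normal to $\partial T$, respectively $\partial\Omega$.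
   Context: Let $\Omega\subset\mathbb R^2$ be a convex polygonal domain, $\Omega=\Omega_1\cup\Gamma\cup\Omega_2$ with $\Omega_1,\Omega_2$ (also written $\Omega^-,\Omega^+$) disjoint open subdomains separated by a $C^2$ interface curve $\Gamma$; for $D\subset\Omega$ put $D_i=D\cap\Omega_i$. For $m=1,2$, $\widetilde H^m(D)=\{u\in H^{m-1}(D):u|_{D_i}\in H^m(D_i),\,i=1,2\}$. The coefficient $\beta$ satisfies $\beta|_{\Omega_i}\in C^1(\Omega_i)$ and $0<\underline\beta<\beta<\overline\beta$. Mesh: $\mathcal T_h$ is a regular triangulation of $\Omega$ of mesh size $h$, not necessarily aligned with $\Gamma$; triangles cut by $\Gamma$ are interface elements. $\mathcal E_h=\mathcal E_h^o\cup\mathcal E_h^\partial$ are the interior and boundary edges, $|e|$ the length of $e$, and each edge carries a fixed unit normal $\mathbf n_e$. For an interior edge $e=\partial T^+\cap\partial T^-$ with outward unit normals $\mathbf n^\pm$ and restrictions $\zeta^\pm,\boldsymbol\tau^\pm$ to $T^\pm$: $\{\zeta\}=\tfrac12(\zeta^++\zeta^-)$, $\{\boldsymbol\tau\}=\tfrac12(\boldsymbol\tau^++\boldsymbol\tau^-)$, $[\zeta]=\zeta^+\mathbf n^++\zeta^-\mathbf n^-$, $[\boldsymbol\tau]=\boldsymbol\tau^+\cdot\mathbf n^++\boldsymbol\tau^-\cdot\mathbf n^-$; on a boundary edge $\{\zeta\}=\zeta$, $\{\boldsymbol\tau\}=\boldsymbol\tau$, $[\zeta]=\zeta\mathbf n$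 with $\mathbf n$ the outward normal. IFEM space: on a non-interface triangle $S_h(T)=\mathcal P^1(T)$. An interface triangle $T$ with vertices $A_1,A_2,A_3$ is divided by the interface (represented in $T$ by the segment joining the two points where $\Gamma$ crosses $\partial T$) into $T^+\subset\Omega^+$, $T^-\subset\Omega^-$, and $\widehat S_h(T)=\mathrm{span}\{\hat\lambda_1,\hat\lambda_2,\hat\lambda_3\}$, where $\hat\lambda_j$ is the unique function linear on each of $T^\pm$ with $\hat\lambda_j(A_i)=\delta_{ij}$ that is continuous and has continuous $\beta\nabla\hat\lambda_j\cdot\mathbf n_\Gamma$ across the interface ($\mathbf n_\Gamma$ the normal to the interface). $\widehat S_h(\Omega)$ consists of the functions $\phi$ with $\phi|_T\in S_h(T)$ (non-interface $T$) or $\phi|_T\in\widehat S_h(T)$ (interface $T$), single-valued at mesh vertices and vanishing at vertices on $\partial\Omega$. $C_h(\Omega)$ is the space of piecewise constants on $\mathcal T_h$. The EIFEM space is $E_h(\Omega)=\widehat S_h(\Omega)+C_h(\Omega)$, and $H_h(\Omega)=\widetilde H^1(\Omega)+E_h(\Omega)$. Bilinear form: with $Q_e^0(v)=\frac1{|e|}\int_e\{v\}\,ds$, a fixed $\theta\in\{-1,0,1\}$ and a penalty $\sigma(\beta)>0$ chosen on each edge, $a_h(v,w)=\sum_T\int_T\beta\nabla v\cdot\nabla w\,dx-\sum_{e\in\mathcal E_h}\int_e\{\beta\nabla v\}\cdot[w]\,ds+\theta\sum_{e\in\mathcal E_h^o}\int_e\{\beta\nabla w\}\cdot[v]\,ds+\theta\sum_{e\in\mathcal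 E_h^\partial}\int_e\{\beta\nabla w\}\cdot[Q_e^0(v)]\,ds+\sum_{e\in\mathcal E_h^o}\frac1{|e|}\int_e\sigma(\beta)[v]\cdot[w]\,ds+\sum_{e\in\mathcal E_h^\partial}\frac1{|e|}\int_e\sigma(\beta)[Q_e^0(v)]\cdot[Q_e^0(w)]\,ds$ for $v,w\in H_h(\Omega)$. *)

theory Defs
  imports "HOL-Analysis.Analysis"
begin

type_synonym R2 = "real^2"

definition convex_polygonal_domain :: "R2 set \<Rightarrow> bool" where
  "convex_polygonal_domain \<Omega> \<longleftrightarrow> (\<exists>P. polytope P \<and> \<Omega> = interior P) \<and> \<Omega> \<noteq> {}"

text \<open>A triangle is represented by its set of three (non-collinear) vertices;
  the closed triangle itself is its convex hull.\<close>
definition is_triangle :: "R2 set \<Rightarrow> bool" where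
  "is_triangle T \<longleftrightarrow> card T = 3 \<and> \<not> collinear T"

text \<open>Conforming triangulation of the closure of the domain: any two distinct
  closed triangles meet in the convex hull of their common vertices (empty set,
  a common vertex or a common edge).\<close>
definition conforming_triangulation :: "R2 set set \<Rightarrow> R2 set \<Rightarrow> bool" where
  "conforming_triangulation \<T> \<Omega> \<longleftrightarrow>
     finite \<T> \<and> (\<forall>T\<in>\<T>. is_triangle T) \<and>
     \<Union>((\<lambda>T. convex hull T) ` \<T>) = closure \<Omega> \<and>
     (\<forall>T\<in>\<T>. \<forall>T'\<in>\<T>. T \<noteq> T' \<longrightarrow> convex hull T \<inter> convex hull T' = convex hull (T \<inter> T'))"

text \<open>Edges are represented by their two-element vertex sets; the closed edge is the convex hull.\<close>
definition edges_of :: "R2 set \<Rightarrow> R2 set set" where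
  "edges_of T = {e. e \<subseteq> T \<and> card e = 2}"

definition mesh_edges :: "R2 set set \<Rightarrow> R2 set set" where
  "mesh_edges \<T> = {e. \<exists>T\<in>\<T>. e \<subseteq> T \<and> card e = 2}"

definition nbrs :: "R2 set set \<Rightarrow> R2 set \<Rightarrow> R2 set set" where
  "nbrs \<T> e = {T\<in>\<T>. e \<subseteq> T}"

definition int_edges :: "R2 set set \<Rightarrow> R2 set set" where
  "int_edges \<T> = {e\<in>mesh_edges \<T>. card (nbrs \<T> e) = 2}"

definition bdry_edges :: "R2 set set \<Rightarrow> R2 set set" where
  "bdry_edges \<T> = {e\<in>mesh_edges \<T>. card (nbrs \<T> e) = 1}"

definition ep1 :: "R2 set \<Rightarrow> R2" where "ep1 e = (SOME A. A \<in> e)"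
definition ep2 :: "R2 set \<Rightarrow> R2" where "ep2 e = (SOME B. B \<in> e \<and> B \<noteq> ep1 e)"

definition elen :: "R2 set \<Rightarrow> real" where
  "elen e = dist (ep1 e) (ep2 e)"

definition edge_int :: "R2 set \<Rightarrow> (R2 \<Rightarrow> real) \<Rightarrow> real" where
  "edge_int e g = elen e * integral {0..1} (\<lambda>t. g ((1 - t) *\<^sub>R ep1 e + t *\<^sub>R ep2 e))"

definition outn :: "R2 set \<Rightarrow> R2 set \<Rightarrow> R2" where
  "outn T e = (let A = ep1 e; B = ep2 e; C = (SOME C. C \<in> T - e); d = B - A;
                   n0 = (vector [- (d $ 2), d $ 1] :: R2)
               in if inner n0 (C - A) < 0 then (1 / norm n0) *\<^sub>R n0 else (- 1 / norm n0) *\<^sub>R n0)"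

text \<open>Gamma is (the part inside Omega of) a simple C^2 regular curve, open or closed.\<close>
definition C2_curve :: "R2 set \<Rightarrow> R2 set \<Rightarrow> bool" where
  "C2_curve \<Omega> \<Gamma> \<longleftrightarrow> (\<exists>(\<gamma>::real \<Rightarrow> R2) \<gamma>' \<gamma>'' a b. a < b \<and>
     (\<forall>t\<in>{a..b}. (\<gamma> has_vector_derivative \<gamma>' t) (at t within {a..b}) \<and>
                 (\<gamma>' has_vector_derivative \<gamma>'' t) (at t within {a..b}) \<and> \<gamma>' t \<noteq> 0) \<and>
     continuous_on {a..b} \<gamma>'' \<and>
     (inj_on \<gamma> {a..b} \<or> (\<gamma> a = \<gamma> b \<and> \<gamma>' a = \<gamma>' b \<and> \<gamma>'' a = \<gamma>'' b \<and> inj_on \<gamma> {a..<b})) \<and>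
     \<Gamma> = \<gamma> ` {a..b} \<inter> \<Omega>)"

definition interface_elem :: "R2 set \<Rightarrow> R2 set \<Rightarrow> bool" where
  "interface_elem \<Gamma> T \<longleftrightarrow> \<Gamma> \<inter> interior (convex hull T) \<noteq> {}"

text \<open>Gradient (zero convention at points of non-differentiability, a null set).\<close>
definition grad :: "(R2 \<Rightarrow> real) \<Rightarrow> R2 \<Rightarrow> R2" where
  "grad g x = (if g differentiable (at x) then (\<chi> i. frechet_derivative g (at x) (axis i 1)) else 0)"

definition avg_on :: "R2 set \<Rightarrow> (R2 \<Rightarrow> real) \<Rightarrow> real" where
  "avg_on S g = (LINT x:S|lebesgue. g x) / measure lebesgue S"

text \<open>Local IFE space on an interface triangle T (vertex set): functions that are
  linear on each side of the straight segment DE joining the two points where Gamma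
  meets the boundary of T, continuous across DE, with continuous flux
  beta grad phi . n_Gamma across DE, where beta on T+ (resp. T-) is the mean of beta over
  T cap Omega2 (resp. T cap Omega1).  Elements are stored as the natural
  piecewise-affine extension to the whole plane.  The affine function l x = nv . x + d
  vanishes on DE and is nonnegative on the T+ (Omega2 = Omega+) side.\<close>
definition IFE_local :: "R2 set \<Rightarrow> R2 set \<Rightarrow> R2 set \<Rightarrow> (R2 \<Rightarrow> real) \<Rightarrow> R2 set \<Rightarrow> (R2 \<Rightarrow> real) set" where
  "IFE_local \<Omega>1 \<Omega>2 \<Gamma> \<beta> T = {\<phi>. \<exists>D E nv d ap bp am bm.
      D \<noteq> E \<and> D \<in> frontier (convex hull T) \<inter> \<Gamma> \<and> E \<in> frontier (convex hull T) \<inter> \<Gamma> \<and>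
      nv \<noteq> 0 \<and> inner nv D + d = 0 \<and> inner nv E + d = 0 \<and>
      (\<forall>a\<in>T. a \<in> closure \<Omega>2 - closure \<Omega>1 \<longrightarrow> 0 \<le> inner nv a + d) \<and>
      (\<forall>a\<in>T. a \<in> closure \<Omega>1 - closure \<Omega>2 \<longrightarrow> inner nv a + d \<le> 0) \<and>
      (\<forall>x. \<phi> x = (if 0 \<le> inner nv x + d then inner ap x + bp else inner am x + bm)) \<and>
      inner ap D + bp = inner am D + bm \<and> inner ap E + bp = inner am E + bm \<and>
      avg_on (convex hull T \<inter> \<Omega>2) \<beta> * inner ap nv = avg_on (convex hull T \<inter> \<Omega>1) \<beta> * inner am nv}"

definition S_loc :: "R2 set \<Rightarrow> R2 set \<Rightarrow> R2 set \<Rightarrow> (R2 \<Rightarrow> real) \<Rightarrow> R2 set \<Rightarrow> (R2 \<Rightarrow> real) set" where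
  "S_loc \<Omega>1 \<Omega>2 \<Gamma> \<beta> T =
     (if interface_elem \<Gamma> T then IFE_local \<Omega>1 \<Omega>2 \<Gamma> \<beta> T
      else {\<phi>. \<exists>a b. \<forall>x. \<phi> x = inner a x + b})"

text \<open>Mesh functions are represented elementwise: v T is the (polynomial-type) function on triangle T.\<close>
definition S_hat :: "R2 set set \<Rightarrow> R2 set \<Rightarrow> R2 set \<Rightarrow> R2 set \<Rightarrow> R2 set \<Rightarrow> (R2 \<Rightarrow> real)
                     \<Rightarrow> (R2 set \<Rightarrow> R2 \<Rightarrow> real) set" where
  "S_hat \<T> \<Omega> \<Omega>1 \<Omega>2 \<Gamma> \<beta> = {s.
     (\<forall>T\<in>\<T>. s T \<in> S_loc \<Omega>1 \<Omega>2 \<Gamma> \<beta> T) \<and>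
     (\<forall>T\<in>\<T>. \<forall>T'\<in>\<T>. \<forall>a\<in>T \<inter> T'. s T a = s T' a) \<and>
     (\<forall>T\<in>\<T>. \<forall>a\<in>T. a \<in> frontier \<Omega> \<longrightarrow> s T a = 0)}"

definition C_h :: "R2 set set \<Rightarrow> (R2 set \<Rightarrow> R2 \<Rightarrow> real) set" where
  "C_h \<T> = {c. \<forall>T\<in>\<T>. \<exists>k. c T = (\<lambda>_. k)}"

definition E_h :: "R2 set set \<Rightarrow> R2 set \<Rightarrow> R2 set \<Rightarrow> R2 set \<Rightarrow> R2 set \<Rightarrow> (R2 \<Rightarrow> real)
                     \<Rightarrow> (R2 set \<Rightarrow> R2 \<Rightarrow> real) set" where
  "E_h \<T> \<Omega> \<Omega>1 \<Omega>2 \<Gamma> \<beta> = {w. \<exists>s\<in>S_hat \<T> \<Omega> \<Omega>1 \<Omega>2 \<Gamma> \<beta>. \<exists>c\<in>C_h \<T>. w = (\<lambda>T x. s T x + c T x)}"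

text \<open>Average of beta grad v on edge e (on a boundary edge: the one-sided value).\<close>
definition avgflux :: "R2 set set \<Rightarrow> (R2 \<Rightarrow> real) \<Rightarrow> (R2 set \<Rightarrow> R2 \<Rightarrow> real) \<Rightarrow> R2 set \<Rightarrow> R2 \<Rightarrow> R2" where
  "avgflux \<T> \<beta> v e x = (1 / real (card (nbrs \<T> e))) *\<^sub>R (\<Sum>T\<in>nbrs \<T> e. (\<beta> x) *\<^sub>R grad (v T) x)"

definition avgval :: "R2 set set \<Rightarrow> (R2 set \<Rightarrow> R2 \<Rightarrow> real) \<Rightarrow> R2 set \<Rightarrow> R2 \<Rightarrow> real" where
  "avgval \<T> v e x = (1 / real (card (nbrs \<T> e))) * (\<Sum>T\<in>nbrs \<T> e. v T x)"

text \<open>Jump [v] (a vector) on edge e (on a boundary edge: v n with n the outward normal).\<close>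
definition jump :: "R2 set set \<Rightarrow> (R2 set \<Rightarrow> R2 \<Rightarrow> real) \<Rightarrow> R2 set \<Rightarrow> R2 \<Rightarrow> R2" where
  "jump \<T> v e x = (\<Sum>T\<in>nbrs \<T> e. v T x *\<^sub>R outn T e)"

definition Q0 :: "R2 set set \<Rightarrow> (R2 set \<Rightarrow> R2 \<Rightarrow> real) \<Rightarrow> R2 set \<Rightarrow> real" where
  "Q0 \<T> v e = edge_int e (avgval \<T> v e) / elen e"

definition jumpQ :: "R2 set set \<Rightarrow> (R2 set \<Rightarrow> R2 \<Rightarrow> real) \<Rightarrow> R2 set \<Rightarrow> R2" where
  "jumpQ \<T> v e = (\<Sum>T\<in>nbrs \<T> e. Q0 \<T> v e *\<^sub>R outn T e)"

definition a_h :: "R2 set set \<Rightarrow> (R2 \<Rightarrow> real) \<Rightarrow> (R2 set \<Rightarrow> real) \<Rightarrow> real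
                   \<Rightarrow> (R2 set \<Rightarrow> R2 \<Rightarrow> real) \<Rightarrow> (R2 set \<Rightarrow> R2 \<Rightarrow> real) \<Rightarrow> real" where
  "a_h \<T> \<beta> \<sigma> \<theta> v w =
     (\<Sum>T\<in>\<T>. LINT x:convex hull T|lebesgue. \<beta> x * inner (grad (v T) x) (grad (w T) x))
   - (\<Sum>e\<in>mesh_edges \<T>. edge_int e (\<lambda>x. inner (avgflux \<T> \<beta> v e x) (jump \<T> w e x)))
   + \<theta> * (\<Sum>e\<in>int_edges \<T>. edge_int e (\<lambda>x. inner (avgflux \<T> \<beta> w e x) (jump \<T> v e x)))
   + \<theta> * (\<Sum>e\<in>bdry_edges \<T>. edge_int e (\<lambda>x. inner (avgflux \<T> \<beta> w e x) (jumpQ \<T> v e)))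
   + (\<Sum>e\<in>int_edges \<T>. (1 / elen e) * edge_int e (\<lambda>x. \<sigma> e * inner (jump \<T> v e x) (jump \<T> w e x)))
   + (\<Sum>e\<in>bdry_edges \<T>. (1 / elen e) * edge_int e (\<lambda>x. \<sigma> e * inner (jumpQ \<T> v e) (jumpQ \<T> w e)))"

definition l2ip :: "R2 set set \<Rightarrow> (R2 \<Rightarrow> real) \<Rightarrow> (R2 set \<Rightarrow> R2 \<Rightarrow> real) \<Rightarrow> real" where
  "l2ip \<T> f w = (\<Sum>T\<in>\<T>. LINT x:convex hull T|lebesgue. f x * w T x)"

definition RT0 :: "R2 set set \<Rightarrow> (R2 set \<Rightarrow> R2 \<Rightarrow> R2) set" where
  "RT0 \<T> = {u. (\<forall>T\<in>\<T>. \<exists>a b. \<forall>x. u T x = a + b *\<^sub>R x) \<and>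
     (\<forall>e\<in>int_edges \<T>. \<forall>T\<in>nbrs \<T> e. \<forall>T'\<in>nbrs \<T> e. T \<noteq> T' \<longrightarrow>
        (\<forall>x\<in>convex hull e. inner (u T x) (outn T e) + inner (u T' x) (outn T' e) = 0))}"

definition rt_dof :: "R2 set set \<Rightarrow> (R2 \<Rightarrow> real) \<Rightarrow> (R2 set \<Rightarrow> real) \<Rightarrow> (R2 set \<Rightarrow> R2)
                      \<Rightarrow> (R2 set \<Rightarrow> R2 \<Rightarrow> real) \<Rightarrow> R2 set \<Rightarrow> real" where
  "rt_dof \<T> \<beta> \<sigma> ne p e = (1 / elen e) *
     edge_int e (\<lambda>x. - inner (avgflux \<T> \<beta> p e x) (ne e) + (\<sigma> e / elen e) * inner (jump \<T> p e x) (ne e))"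

end

theory Submission
  imports Defs
begin

(* Test the scheme with the indicator function w_T of a triangle T: it is piecewise constant, hence
   in E_h, and its gradient and edge averages vanish, so the volume term and both theta-terms of
   a_h(p_h, w_T) drop out. What remains is, edge by edge of T, the numerical flux
   - int_e {beta grad p_h}.n_T + sigma/|e| int_e [p_h].n_T. Since n_T = +-n_e and u_h.n_e is the
   constant degree of freedom on e, this flux is int_e u_h.n_T, while
   (f, w_T) = int_T f: local conservation. Summing over T, the fluxes through interior edges cancel
   by the normal continuity of u_h, and the closed triangles cover the closure of Omega with
   overlaps of measure zero, giving global conservation. *)

section \<open>Planar vectors and edges\<close>

lemma inner_R2: "inner (x::R2) y = x$1 * y$1 + x$2 * y$2"
  by (simp add: inner_vec_def sum_2)

lemma R2_eq_iff: "(x::R2) = y \<longleftrightarrow> x$1 = y$1 \<and> x$2 = y$2"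
  by (simp add: vec_eq_iff forall_2)

definition cross2 :: "R2 \<Rightarrow> R2 \<Rightarrow> real" where
  "cross2 u v = u$1 * v$2 - u$2 * v$1"

definition rot90 :: "R2 \<Rightarrow> R2" where
  "rot90 d = vector [- (d$2), d$1]"

lemma inner_rot90: "inner (rot90 d) x = cross2 d x"
  by (simp add: rot90_def inner_R2 cross2_def algebra_simps)

lemma rot90_eq_0_iff [simp]: "rot90 d = 0 \<longleftrightarrow> d = 0"
  by (auto simp: rot90_def R2_eq_iff)

lemma cross2_self [simp]: "cross2 d d = 0"
  by (simp add: cross2_def)

lemma cross2_linear: "cross2 d (a *\<^sub>R x + b *\<^sub>R y) = a * cross2 d x + b * cross2 d y"
  by (simp add: cross2_def algebra_simps)

lemma cross2_scaleR: "cross2 d (c *\<^sub>R x) = c * cross2 d x"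
  by (simp add: cross2_def algebra_simps)

lemma cross2_diff: "cross2 d (x - y) = cross2 d x - cross2 d y"
  by (simp add: cross2_def algebra_simps)

lemma cross2_eq_0_imp_parallel:
  assumes "d \<noteq> 0" "cross2 d v = 0"
  obtains \<mu> where "v = \<mu> *\<^sub>R d"
proof (cases "d$1 = 0")
  case True
  then have "d$2 \<noteq> 0" using assms(1) by (auto simp: R2_eq_iff)
  then have "v = (v$2 / d$2) *\<^sub>R d" using True assms(2) by (simp add: R2_eq_iff cross2_def field_simps)
  then show ?thesis by (rule that)
next
  case False
  then have "v = (v$1 / d$1) *\<^sub>R d" using assms(2) by (simp add: R2_eq_iff cross2_def field_simps)
  then show ?thesis by (rule that)
qed

lemma cross2_eq_0_if_orthogonal:
  assumes "n \<noteq> 0" "inner v n = 0" "inner w n = 0"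
  shows "cross2 v w = 0"
proof -
  have "n$1 * cross2 v w = w$2 * inner v n - v$2 * inner w n"
       "n$2 * cross2 v w = v$1 * inner w n - w$1 * inner v n"
    by (simp_all add: cross2_def inner_R2 algebra_simps)
  moreover have "n$1 \<noteq> 0 \<or> n$2 \<noteq> 0" using assms(1) by (auto simp: R2_eq_iff)
  ultimately show ?thesis using assms(2,3) by auto
qed

lemma parallel_if_orthogonal_to_same:
  fixes n v w :: R2
  assumes "n \<noteq> 0" "w \<noteq> 0" "inner v n = 0" "inner w n = 0"
  obtains \<mu> where "v = \<mu> *\<^sub>R w"
  using cross2_eq_0_if_orthogonal[OF assms(1,4,3)] cross2_eq_0_imp_parallel[OF assms(2)] by blast

lemma ep_props:
  assumes "card e = 2"
  shows "ep1 e \<in> e" "ep2 e \<in> e" "ep1 e \<noteq> ep2 e" "e = {ep1 e, ep2 e}"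
proof -
  obtain a b where ab: "e = {a, b}" "a \<noteq> b" using assms card_2_iff by metis
  show 1: "ep1 e \<in> e" unfolding ep1_def using ab by (metis insertI1 someI_ex)
  have "\<exists>B. B \<in> e \<and> B \<noteq> ep1 e" using ab 1 by auto
  then show 2: "ep2 e \<in> e" and 3: "ep1 e \<noteq> ep2 e"
    unfolding ep2_def by (metis (mono_tags, lifting) someI_ex)+
  show "e = {ep1 e, ep2 e}" using 1 2 3 ab by auto
qed

lemma elen_pos: "card e = 2 \<Longrightarrow> 0 < elen e"
  using ep_props[of e] by (simp add: elen_def)

lemma convex_hull_edge: "card e = 2 \<Longrightarrow> convex hull e = closed_segment (ep1 e) (ep2 e)"
  by (metis ep_props(4) segment_convex_hull)

lemma edge_point_in_hull:
  assumes "card e = 2" "t \<in> {0..1}"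
  shows "(1 - t) *\<^sub>R ep1 e + t *\<^sub>R ep2 e \<in> convex hull e"
  using assms by (auto simp: convex_hull_edge closed_segment_def)

lemma outn_unit_orthogonal:
  assumes "card e = 2"
  shows "norm (outn T e) = 1" "inner (outn T e) (ep2 e - ep1 e) = 0"
proof -
  let ?n = "rot90 (ep2 e - ep1 e)"
  have n: "?n \<noteq> 0" using ep_props[OF assms] by simp
  have "outn T e = (1 / norm ?n) *\<^sub>R ?n \<or> outn T e = (- 1 / norm ?n) *\<^sub>R ?n"
    unfolding outn_def Let_def rot90_def by auto
  then show "norm (outn T e) = 1" "inner (outn T e) (ep2 e - ep1 e) = 0"
    using n by (auto simp: inner_rot90)
qed

lemma outn_eq_scaled_normal:
  assumes "card e = 2" "norm n = 1" "inner n (ep2 e - ep1 e) = 0"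
  shows "outn T e = inner (outn T e) n *\<^sub>R n"
proof -
  have "ep2 e - ep1 e \<noteq> 0" using ep_props[OF assms(1)] by simp
  moreover have "n \<noteq> 0" using assms(2) by auto
  ultimately obtain \<mu> where \<mu>: "outn T e = \<mu> *\<^sub>R n"
    using parallel_if_orthogonal_to_same outn_unit_orthogonal(2)[OF assms(1)] assms(3) by metis
  then show ?thesis using assms(2) by (simp add: norm_eq_1)
qed

lemma finite_triangle: "is_triangle T \<Longrightarrow> finite T"
  unfolding is_triangle_def by (metis card.infinite zero_neq_numeral)

lemma triangle_apex:
  assumes "is_triangle T" "e \<subseteq> T" "card e = 2"
  obtains C where "T = insert C e" "C \<notin> e" "cross2 (ep2 e - ep1 e) (C - ep1 e) \<noteq> 0"
proof -
  let ?A = "ep1 e" and ?B = "ep2 e"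
  have "card (T - e) = 1"
    using assms by (simp add: card_Diff_subset finite_subset finite_triangle is_triangle_def)
  then obtain C where C: "T - e = {C}" using card_1_singletonE by blast
  then have TC: "T = insert C e" "C \<notin> e" using assms(2) by auto
  have "cross2 (?B - ?A) (C - ?A) \<noteq> 0"
  proof
    assume "cross2 (?B - ?A) (C - ?A) = 0"
    then obtain \<mu> where "C - ?A = \<mu> *\<^sub>R (?B - ?A)"
      using cross2_eq_0_imp_parallel ep_props[OF assms(3)] by (metis right_minus_eq)
    then have "C = (1 - \<mu>) *\<^sub>R ?A + \<mu> *\<^sub>R ?B" by (simp add: algebra_simps)
    then have "collinear {?A, ?B, C}"
      by (intro affine_hull_3_imp_collinear) (force simp: affine_hull_2)
    moreover have "T = {?A, ?B, C}" using TC ep_props[OF assms(3)] by auto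
    ultimately show False using assms(1) by (simp add: is_triangle_def)
  qed
  then show ?thesis using TC that by blast
qed

lemma convex_hull_3_memI:
  "0 \<le> u \<Longrightarrow> 0 \<le> v \<Longrightarrow> 0 \<le> w \<Longrightarrow> u + v + w = 1 \<Longrightarrow> u *\<^sub>R a + v *\<^sub>R b + w *\<^sub>R c \<in> convex hull {a, b, c}"
  unfolding convex_hull_3 by blast

lemma not_in_segment_if_cross2:
  assumes "cross2 (B - A) (x - A) \<noteq> 0"
  shows "x \<notin> convex hull {A, B}"
proof
  assume "x \<in> convex hull {A, B}"
  then obtain t where "x = (1 - t) *\<^sub>R A + t *\<^sub>R B"
    by (auto simp: segment_convex_hull[symmetric] closed_segment_def)
  then have "x - A = t *\<^sub>R (B - A)" by (simp add: algebra_simps)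
  then show False using assms by (simp add: cross2_scaleR)
qed

text \<open>The common point is taken near the midpoint of AB, slightly towards C1.\<close>
lemma same_side_triangles_overlap:
  fixes A B C1 C2 :: R2
  assumes AB: "A \<noteq> B" and same_side: "0 < cross2 (B - A) (C1 - A) * cross2 (B - A) (C2 - A)"
  obtains x where "x \<in> convex hull {A, B, C1}" "x \<in> convex hull {A, B, C2}" "x \<notin> convex hull {A, B}"
proof -
  define k1 where "k1 = cross2 (B - A) (C1 - A)"
  define k2 where "k2 = cross2 (B - A) (C2 - A)"
  define r where "r = k1 / k2"
  have k: "k1 \<noteq> 0" "k2 \<noteq> 0" using same_side by (auto simp: k1_def k2_def)
  have r: "0 < r" using same_side by (simp add: r_def k1_def k2_def zero_less_divide_iff zero_less_mult_iff)
  have "cross2 (B - A) ((C1 - A) - r *\<^sub>R (C2 - A)) = k1 - r * k2"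
    unfolding k1_def k2_def by (simp only: cross2_diff[of _ "C1 - A"] cross2_scaleR)
  then have "cross2 (B - A) ((C1 - A) - r *\<^sub>R (C2 - A)) = 0"
    using k by (simp add: r_def)
  then obtain \<nu> where \<nu>: "(C1 - A) - r *\<^sub>R (C2 - A) = \<nu> *\<^sub>R (B - A)"
    using cross2_eq_0_imp_parallel AB by (metis right_minus_eq)
  define l where "l = 1 / (2 * (1 + r + \<bar>\<nu>\<bar>))"
  have "0 < 1 + r + \<bar>\<nu>\<bar>" using r by simp
  then have "0 < l" "l * (1 + r + \<bar>\<nu>\<bar>) = 1/2" unfolding l_def by simp_all
  then have l: "0 < l" "l + l * r + l * \<bar>\<nu>\<bar> = 1/2" by (simp_all add: algebra_simps)
  have l_\<nu>: "0 \<le> l * r" "0 \<le> l * \<bar>\<nu>\<bar>" "- (l * \<bar>\<nu>\<bar>) \<le> l * \<nu>" "l * \<nu> \<le> l * \<bar>\<nu>\<bar>"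
    using r mult_left_mono[of "- \<bar>\<nu>\<bar>" \<nu> l] mult_left_mono[of \<nu> "\<bar>\<nu>\<bar>" l] l(1) by simp_all
  define x where "x = ((1 - l) / 2) *\<^sub>R A + ((1 - l) / 2) *\<^sub>R B + l *\<^sub>R C1"
  have "x \<in> convex hull {A, B, C1}"
    unfolding x_def using l l_\<nu> by (intro convex_hull_3_memI; argo)
  moreover have "x \<in> convex hull {A, B, C2}"
  proof -
    define a where "a = (1 + l) / 2 - l * r - l * \<nu>"
    define b where "b = (1 - l) / 2 + l * \<nu>"
    have C1: "C1 = A + r *\<^sub>R (C2 - A) + \<nu> *\<^sub>R (B - A)" using \<nu> by (simp add: algebra_simps)
    have "x = a *\<^sub>R A + b *\<^sub>R B + (l * r) *\<^sub>R C2"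
      unfolding x_def C1 a_def b_def by (simp add: R2_eq_iff algebra_simps add_divide_distrib diff_divide_distrib)
    moreover have "0 \<le> a" "0 \<le> b" "a + b + l * r = 1"
      using l l_\<nu> unfolding a_def b_def by argo+
    ultimately show ?thesis using l r by (simp add: convex_hull_3_memI)
  qed
  moreover have "x \<notin> convex hull {A, B}"
  proof (rule not_in_segment_if_cross2)
    have "x - A = ((1 - l) / 2) *\<^sub>R (B - A) + l *\<^sub>R (C1 - A)"
      unfolding x_def by (simp add: R2_eq_iff field_simps)
    then show "cross2 (B - A) (x - A) \<noteq> 0"
      using l(1) k by (simp add: cross2_linear k1_def[symmetric])
  qed
  ultimately show ?thesis using that by blast
qed

section \<open>Edges of a conforming triangulation\<close>

lemma conforming_neighbours_opposite_sides:
  assumes mesh: "conforming_triangulation \<T> \<Omega>" and e: "card e = 2"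
    and T: "T1 \<in> \<T>" "T2 \<in> \<T>" "T1 \<noteq> T2" "T1 = insert C1 e" "T2 = insert C2 e" "C1 \<notin> e" "C2 \<notin> e"
  shows "\<not> 0 < cross2 (ep2 e - ep1 e) (C1 - ep1 e) * cross2 (ep2 e - ep1 e) (C2 - ep1 e)"
proof
  let ?A = "ep1 e" and ?B = "ep2 e"
  assume "0 < cross2 (?B - ?A) (C1 - ?A) * cross2 (?B - ?A) (C2 - ?A)"
  then obtain x where x: "x \<in> convex hull {?A, ?B, C1}" "x \<in> convex hull {?A, ?B, C2}" "x \<notin> convex hull e"
    using same_side_triangles_overlap ep_props[OF e] by metis
  have "T1 \<inter> T2 = e" using T by auto
  then have "convex hull T1 \<inter> convex hull T2 = convex hull e"
    using mesh T unfolding conforming_triangulation_def by auto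
  moreover have "convex hull T1 = convex hull {?A, ?B, C1}" "convex hull T2 = convex hull {?A, ?B, C2}"
    using T ep_props(4)[OF e] by (simp_all add: insert_commute)
  ultimately show False using x by auto
qed

text \<open>Three triangles on one edge would put two of their apexes on the same side of it.\<close>
lemma card_nbrs:
  assumes mesh: "conforming_triangulation \<T> \<Omega>" and e: "e \<in> mesh_edges \<T>"
  shows "card (nbrs \<T> e) = 1 \<or> card (nbrs \<T> e) = 2"
proof -
  have fin: "finite (nbrs \<T> e)" using mesh unfolding conforming_triangulation_def nbrs_def by auto
  obtain T0 where T0: "T0 \<in> \<T>" "e \<subseteq> T0" and e2: "card e = 2" using e unfolding mesh_edges_def by auto
  then have "nbrs \<T> e \<noteq> {}" unfolding nbrs_def by auto
  then have "1 \<le> card (nbrs \<T> e)" using fin by (simp add: Suc_le_eq card_gt_0_iff)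
  moreover have "\<not> 3 \<le> card (nbrs \<T> e)"
  proof
    assume "3 \<le> card (nbrs \<T> e)"
    then obtain T1 T2 T3 where Ts: "T1 \<in> nbrs \<T> e" "T2 \<in> nbrs \<T> e" "T3 \<in> nbrs \<T> e"
      "T1 \<noteq> T2" "T1 \<noteq> T3" "T2 \<noteq> T3"
      by (auto simp: numeral_3_eq_3 card_le_Suc_iff)
    let ?k = "\<lambda>C. cross2 (ep2 e - ep1 e) (C - ep1 e)"
    have apex: "\<exists>C. T = insert C e \<and> C \<notin> e \<and> ?k C \<noteq> 0" if "T \<in> nbrs \<T> e" for T
      using that triangle_apex[OF _ _ e2] mesh unfolding nbrs_def conforming_triangulation_def
      by (metis (no_types, lifting) mem_Collect_eq)
    obtain C1 C2 C3 where C: "T1 = insert C1 e" "C1 \<notin> e" "?k C1 \<noteq> 0"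
      "T2 = insert C2 e" "C2 \<notin> e" "?k C2 \<noteq> 0" "T3 = insert C3 e" "C3 \<notin> e" "?k C3 \<noteq> 0"
      using apex Ts(1-3) by metis
    have "T1 \<in> \<T>" "T2 \<in> \<T>" "T3 \<in> \<T>" using Ts unfolding nbrs_def by auto
    then have "\<not> 0 < ?k C1 * ?k C2" "\<not> 0 < ?k C1 * ?k C3" "\<not> 0 < ?k C2 * ?k C3"
      using conforming_neighbours_opposite_sides[OF mesh e2] Ts(4-6) C by metis+
    with C(3,6,9) show False by (simp add: zero_less_mult_iff) linarith
  qed
  ultimately show ?thesis by linarith
qed

lemma conforming_triangulation_finite: "conforming_triangulation \<T> \<Omega> \<Longrightarrow> finite \<T>"
  by (simp add: conforming_triangulation_def)

lemma mesh_edge_card: "e \<in> mesh_edges \<T> \<Longrightarrow> card e = 2"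
  unfolding mesh_edges_def by auto

lemma finite_nbrs: "finite \<T> \<Longrightarrow> finite (nbrs \<T> e)"
  unfolding nbrs_def by simp

lemma finite_mesh_edges:
  assumes "conforming_triangulation \<T> \<Omega>"
  shows "finite (mesh_edges \<T>)"
proof (rule finite_subset)
  show "mesh_edges \<T> \<subseteq> Pow (\<Union>\<T>)" unfolding mesh_edges_def by auto
  show "finite (Pow (\<Union>\<T>))"
    using assms finite_triangle unfolding conforming_triangulation_def by simp
qed

lemma edges_of_eq: "T \<in> \<T> \<Longrightarrow> edges_of T = {e \<in> mesh_edges \<T>. T \<in> nbrs \<T> e}"
  unfolding edges_of_def mesh_edges_def nbrs_def by auto

lemma sum_edges_of_eq:
  assumes "conforming_triangulation \<T> \<Omega>" "T \<in> \<T>"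
  shows "(\<Sum>e\<in>edges_of T. g e) = (\<Sum>e\<in>mesh_edges \<T>. if T \<in> nbrs \<T> e then g e else 0)"
  using finite_mesh_edges[OF assms(1)] by (simp add: edges_of_eq[OF assms(2)] sum.inter_filter)

lemma sum_mesh_edges_split:
  assumes "conforming_triangulation \<T> \<Omega>"
  shows "(\<Sum>e\<in>mesh_edges \<T>. g e) = (\<Sum>e\<in>int_edges \<T>. g e) + (\<Sum>e\<in>bdry_edges \<T>. g e)"
proof -
  have "mesh_edges \<T> = int_edges \<T> \<union> bdry_edges \<T>"
    using card_nbrs[OF assms] unfolding int_edges_def bdry_edges_def by auto
  moreover have "finite (int_edges \<T>)" "finite (bdry_edges \<T>)"
    using finite_mesh_edges[OF assms] unfolding int_edges_def bdry_edges_def by simp_all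
  moreover have "int_edges \<T> \<inter> bdry_edges \<T> = {}"
    unfolding int_edges_def bdry_edges_def by auto
  ultimately show ?thesis by (metis sum.union_disjoint)
qed

lemma sum_elements_edges_swap:
  assumes "conforming_triangulation \<T> \<Omega>"
  shows "(\<Sum>T\<in>\<T>. \<Sum>e\<in>edges_of T. g T e) = (\<Sum>e\<in>mesh_edges \<T>. \<Sum>T\<in>nbrs \<T> e. g T e)"
proof -
  have "(\<Sum>T\<in>\<T>. \<Sum>e\<in>edges_of T. g T e) = (\<Sum>T\<in>\<T>. \<Sum>e\<in>{e. e \<in> mesh_edges \<T> \<and> e \<subseteq> T}. g T e)"
    by (intro sum.cong refl) (auto simp: edges_of_eq nbrs_def)
  also have "\<dots> = (\<Sum>e\<in>mesh_edges \<T>. \<Sum>T\<in>{T. T \<in> \<T> \<and> e \<subseteq> T}. g T e)"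
    using assms finite_mesh_edges[OF assms] unfolding conforming_triangulation_def
    by (intro sum.swap_restrict) auto
  finally show ?thesis unfolding nbrs_def by simp
qed

lemma sum_elements_edges_eq_bdry:
  assumes mesh: "conforming_triangulation \<T> \<Omega>"
    and cancel: "\<And>e T T'. e \<in> int_edges \<T> \<Longrightarrow> T \<in> nbrs \<T> e \<Longrightarrow> T' \<in> nbrs \<T> e \<Longrightarrow> T \<noteq> T'
                   \<Longrightarrow> g T e + g T' e = 0"
  shows "(\<Sum>T\<in>\<T>. \<Sum>e\<in>edges_of T. g T e) = (\<Sum>e\<in>bdry_edges \<T>. \<Sum>T\<in>nbrs \<T> e. g T e)"
proof -
  have "(\<Sum>T\<in>nbrs \<T> e. g T e) = 0" if e: "e \<in> int_edges \<T>" for e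
  proof -
    obtain T1 T2 where "nbrs \<T> e = {T1, T2}" "T1 \<noteq> T2"
      using e unfolding int_edges_def by (auto simp: card_2_iff)
    then show ?thesis using cancel[OF e] by simp
  qed
  then show ?thesis
    by (simp add: sum_elements_edges_swap[OF mesh] sum_mesh_edges_split[OF mesh])
qed

section \<open>Continuous two-piece affine functions\<close>

definition two_piece :: "R2 \<Rightarrow> real \<Rightarrow> R2 \<Rightarrow> real \<Rightarrow> R2 \<Rightarrow> real \<Rightarrow> R2 \<Rightarrow> real" where
  "two_piece nv d ap bp am bm x = (if 0 \<le> inner nv x + d then inner ap x + bp else inner am x + bm)"

definition two_piece_affine :: "(R2 \<Rightarrow> real) \<Rightarrow> bool" where
  "two_piece_affine g \<longleftrightarrow> (\<exists>nv d ap bp am bm.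
     (\<forall>x. inner nv x + d = 0 \<longrightarrow> inner ap x + bp = inner am x + bm) \<and> g = two_piece nv d ap bp am bm)"

lemma grad_eq_locally_affine:
  assumes "open S" "x \<in> S" "\<And>y. y \<in> S \<Longrightarrow> g y = inner a y + b"
  shows "grad g x = a"
proof -
  have "((\<lambda>y. inner a y + b) has_derivative (\<lambda>h. inner a h)) (at x)"
    by (auto intro!: derivative_eq_intros)
  then have D: "(g has_derivative (\<lambda>h. inner a h)) (at x)"
    by (rule has_derivative_transform_within_open[OF _ assms(1,2)]) (use assms(3) in auto)
  then have "g differentiable (at x)" "frechet_derivative g (at x) = (\<lambda>h. inner a h)"
    by (auto simp: differentiable_def frechet_derivative_at[OF D, symmetric])
  then show ?thesis unfolding grad_def by (simp add: vec_eq_iff inner_axis)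
qed

lemma has_derivative_halfplane_unique:
  fixes c :: R2
  assumes x: "inner c x + k = 0"
    and "(f has_derivative f1) (at x within {y. 0 \<le> inner c y + k})"
    and "(f has_derivative f2) (at x within {y. 0 \<le> inner c y + k})"
  shows "f1 = f2"
proof (rule frechet_derivative_unique_within[OF assms(2,3)])
  fix i :: R2 and e :: real
  assume "0 < e"
  show "\<exists>d. 0 < \<bar>d\<bar> \<and> \<bar>d\<bar> < e \<and> x + d *\<^sub>R i \<in> {y. 0 \<le> inner c y + k}"
  proof (cases "0 \<le> inner c i")
    case True
    then have "0 \<le> e * inner c i" using \<open>0 < e\<close> by simp
    then show ?thesis using \<open>0 < e\<close> x
      by (intro exI[of _ "e / 2"]) (simp add: algebra_simps)
  next
    case False
    then have "0 \<le> - (e * inner c i)" using \<open>0 < e\<close> mult_pos_neg[of e "inner c i"] by linarith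
    then show ?thesis using \<open>0 < e\<close> x
      by (intro exI[of _ "- e / 2"]) (simp add: algebra_simps)
  qed
qed

text \<open>A derivative at a point of the line would be determined by the restriction to either closed
  half-plane, on which the function is affine.\<close>
lemma two_piece_not_differentiable:
  assumes line: "\<forall>x. inner nv x + d = 0 \<longrightarrow> inner ap x + bp = inner am x + bm"
    and x: "inner nv x + d = 0" and apm: "ap \<noteq> am"
  shows "\<not> two_piece nv d ap bp am bm differentiable (at x)"
proof
  assume "two_piece nv d ap bp am bm differentiable (at x)"
  then obtain D where D: "(two_piece nv d ap bp am bm has_derivative D) (at x)"
    by (auto simp: differentiable_def)
  have affine: "((\<lambda>y. inner a y + b) has_derivative (\<lambda>h. inner a h)) (at x within S)" for a b S
    by (auto intro!: derivative_eq_intros)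
  let ?Hp = "{y. 0 \<le> inner nv y + d}" and ?Hm = "{y. 0 \<le> inner (- nv) y + (- d)}"
  have "((\<lambda>y. inner ap y + bp) has_derivative D) (at x within ?Hp)"
    using has_derivative_at_withinI[OF D]
    by (rule has_derivative_transform_within[where d = 1]) (use x in \<open>auto simp: two_piece_def\<close>)
  then have Dp: "D = (\<lambda>h. inner ap h)"
    using has_derivative_halfplane_unique[OF x] affine by blast
  have "((\<lambda>y. inner am y + bm) has_derivative D) (at x within ?Hm)"
    using has_derivative_at_withinI[OF D]
    by (rule has_derivative_transform_within[where d = 1]) (use x line in \<open>auto simp: two_piece_def\<close>)
  moreover have "inner (- nv) x + (- d) = 0" using x by simp
  ultimately have "D = (\<lambda>h. inner am h)"
    using has_derivative_halfplane_unique affine by blast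
  with Dp have "inner (ap - am) (ap - am) = 0"
    by (metis inner_diff_left right_minus_eq)
  then show False using apm by simp
qed

lemma grad_two_piece:
  assumes line: "\<forall>x. inner nv x + d = 0 \<longrightarrow> inner ap x + bp = inner am x + bm"
  shows "grad (two_piece nv d ap bp am bm) x =
    (if 0 < inner nv x + d then ap else if inner nv x + d < 0 then am else if ap = am then ap else 0)"
proof -
  consider "0 < inner nv x + d" | "inner nv x + d < 0" | "inner nv x + d = 0" "ap = am"
    | "inner nv x + d = 0" "ap \<noteq> am"
    by linarith
  then show ?thesis
  proof cases
    case 1
    have "open {y. 0 < inner nv y + d}" by (intro open_Collect_less continuous_intros)
    then have "grad (two_piece nv d ap bp am bm) x = ap"
      by (rule grad_eq_locally_affine) (use 1 in \<open>auto simp: two_piece_def\<close>)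
    with 1 show ?thesis by simp
  next
    case 2
    have "open {y. inner nv y + d < 0}" by (intro open_Collect_less continuous_intros)
    then have "grad (two_piece nv d ap bp am bm) x = am"
      by (rule grad_eq_locally_affine) (use 2 in \<open>auto simp: two_piece_def\<close>)
    with 2 show ?thesis by simp
  next
    case 3
    then have "bp = bm" using line by auto
    then have "grad (two_piece nv d ap bp am bm) x = ap"
      by (intro grad_eq_locally_affine[of UNIV]) (use 3 in \<open>auto simp: two_piece_def\<close>)
    with 3 show ?thesis by simp
  next
    case 4
    then show ?thesis using two_piece_not_differentiable[OF line] by (simp add: grad_def)
  qed
qed

lemma two_piece_affine_grad:
  assumes "two_piece_affine g"
  shows "grad g \<in> borel_measurable borel" "\<exists>G. \<forall>x. norm (grad g x) \<le> G"
proof -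
  obtain nv d ap bp am bm where line: "\<forall>x. inner nv x + d = 0 \<longrightarrow> inner ap x + bp = inner am x + bm"
    and g: "g = two_piece nv d ap bp am bm"
    using assms unfolding two_piece_affine_def by blast
  have grad_g: "grad g = (\<lambda>x. if 0 < inner nv x + d then ap else if inner nv x + d < 0 then am
                                else if ap = am then ap else 0)"
    using grad_two_piece[OF line] g by auto
  show "grad g \<in> borel_measurable borel" unfolding grad_g by measurable
  show "\<exists>G. \<forall>x. norm (grad g x) \<le> G"
    by (rule exI[of _ "norm ap + norm am"]) (simp add: grad_g)
qed

lemma two_piece_affine_continuous:
  assumes "two_piece_affine g"
  shows "continuous_on UNIV g"
proof -
  obtain nv d ap bp am bm where line: "\<forall>x. inner nv x + d = 0 \<longrightarrow> inner ap x + bp = inner am x + bm"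
    and g: "g = two_piece nv d ap bp am bm"
    using assms unfolding two_piece_affine_def by blast
  have "closed {x. 0 \<le> inner nv x + d}" "closed {x. inner nv x + d \<le> 0}"
    by (intro closed_Collect_le continuous_intros)+
  then have "continuous_on ({x. 0 \<le> inner nv x + d} \<union> {x. inner nv x + d \<le> 0}) g"
    unfolding g two_piece_def using line
    by (intro continuous_on_cases continuous_intros) auto
  moreover have "{x. 0 \<le> inner nv x + d} \<union> {x. inner nv x + d \<le> 0} = UNIV" by auto
  ultimately show ?thesis by simp
qed

lemma affine_agree_on_line:
  fixes D E nv :: R2
  assumes "D \<noteq> E" "nv \<noteq> 0" "inner nv D + d = 0" "inner nv E + d = 0"
    and "inner ap D + bp = inner am D + bm" "inner ap E + bp = inner am E + bm"
  shows "\<forall>x. inner nv x + d = 0 \<longrightarrow> inner ap x + bp = inner am x + bm"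
proof (intro allI impI)
  fix x
  assume "inner nv x + d = 0"
  then have "inner nv (x - D) = 0" "inner nv (E - D) = 0"
    using assms(3,4) by (simp_all add: inner_diff_right)
  then have "inner (x - D) nv = 0" "inner (E - D) nv = 0" by (simp_all add: inner_commute)
  then obtain \<mu> where "x - D = \<mu> *\<^sub>R (E - D)"
    using parallel_if_orthogonal_to_same assms(1,2) by (metis right_minus_eq)
  then have x: "x = (1 - \<mu>) *\<^sub>R D + \<mu> *\<^sub>R E" by (simp add: algebra_simps)
  have "inner (ap - am) x + (bp - bm)
      = (1 - \<mu>) * (inner (ap - am) D + (bp - bm)) + \<mu> * (inner (ap - am) E + (bp - bm))"
    unfolding x by (simp add: algebra_simps)
  also have "\<dots> = 0" using assms(5,6) by (simp add: algebra_simps)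
  finally show "inner ap x + bp = inner am x + bm" by (simp add: inner_diff_left)
qed

lemma E_h_two_piece_affine:
  assumes "p \<in> E_h \<T> \<Omega> \<Omega>1 \<Omega>2 \<Gamma> \<beta>" "T \<in> \<T>"
  shows "two_piece_affine (p T)"
proof -
  obtain s c where s: "s \<in> S_hat \<T> \<Omega> \<Omega>1 \<Omega>2 \<Gamma> \<beta>" and c: "c \<in> C_h \<T>" and p: "p = (\<lambda>T x. s T x + c T x)"
    using assms(1) unfolding E_h_def by blast
  obtain k where k: "c T = (\<lambda>_. k)" using c assms(2) unfolding C_h_def by blast
  have sT: "s T \<in> S_loc \<Omega>1 \<Omega>2 \<Gamma> \<beta> T" using s assms(2) unfolding S_hat_def by blast
  show ?thesis
  proof (cases "interface_elem \<Gamma> T")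
    case True
    with sT have "s T \<in> IFE_local \<Omega>1 \<Omega>2 \<Gamma> \<beta> T" by (simp add: S_loc_def)
    then obtain D E nv d ap bp am bm where
      DE: "D \<noteq> E" "nv \<noteq> 0" "inner nv D + d = 0" "inner nv E + d = 0"
        "inner ap D + bp = inner am D + bm" "inner ap E + bp = inner am E + bm"
      and sT_eq: "\<forall>x. s T x = (if 0 \<le> inner nv x + d then inner ap x + bp else inner am x + bm)"
      unfolding IFE_local_def mem_Collect_eq by blast
    have "p T = two_piece nv d ap (bp + k) am (bm + k)"
      using sT_eq k p by (auto simp: two_piece_def)
    moreover have "\<forall>x. inner nv x + d = 0 \<longrightarrow> inner ap x + (bp + k) = inner am x + (bm + k)"
      using affine_agree_on_line[OF DE] by auto
    ultimately show ?thesis unfolding two_piece_affine_def by blast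
  next
    case False
    then obtain a b where "\<forall>x. s T x = inner a x + b" using sT unfolding S_loc_def by auto
    then have "p T = two_piece 0 0 a (b + k) a (b + k)"
      using k p by (auto simp: two_piece_def)
    then show ?thesis unfolding two_piece_affine_def by blast
  qed
qed

section \<open>Testing the scheme with element indicators\<close>

definition elem_indicator :: "R2 set \<Rightarrow> R2 set \<Rightarrow> R2 \<Rightarrow> real" where
  "elem_indicator T = (\<lambda>T' x. if T' = T then 1 else 0)"

text \<open>On an interface element, exhibiting 0 as an IFE function needs a cut line with the sign
  conditions of \<open>IFE_local\<close>; any element of the space supplies one.\<close>
lemma zero_in_S_hat:
  assumes "S_hat \<T> \<Omega> \<Omega>1 \<Omega>2 \<Gamma> \<beta> \<noteq> {}"
  shows "(\<lambda>T x. 0) \<in> S_hat \<T> \<Omega> \<Omega>1 \<Omega>2 \<Gamma> \<beta>"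
proof -
  obtain s where s: "s \<in> S_hat \<T> \<Omega> \<Omega>1 \<Omega>2 \<Gamma> \<beta>" using assms by blast
  have "(\<lambda>x. 0) \<in> S_loc \<Omega>1 \<Omega>2 \<Gamma> \<beta> T" if T: "T \<in> \<T>" for T
  proof (cases "interface_elem \<Gamma> T")
    case True
    have "s T \<in> S_loc \<Omega>1 \<Omega>2 \<Gamma> \<beta> T" using s T unfolding S_hat_def by blast
    with True have "s T \<in> IFE_local \<Omega>1 \<Omega>2 \<Gamma> \<beta> T" by (simp add: S_loc_def)
    then obtain D E nv d where I:
      "D \<noteq> E" "D \<in> frontier (convex hull T) \<inter> \<Gamma>" "E \<in> frontier (convex hull T) \<inter> \<Gamma>"
      "nv \<noteq> 0" "inner nv D + d = 0" "inner nv E + d = 0"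
      "\<forall>a\<in>T. a \<in> closure \<Omega>2 - closure \<Omega>1 \<longrightarrow> 0 \<le> inner nv a + d"
      "\<forall>a\<in>T. a \<in> closure \<Omega>1 - closure \<Omega>2 \<longrightarrow> inner nv a + d \<le> 0"
      unfolding IFE_local_def mem_Collect_eq by (elim exE conjE) blast
    have "(\<lambda>x. 0) \<in> IFE_local \<Omega>1 \<Omega>2 \<Gamma> \<beta> T"
      unfolding IFE_local_def mem_Collect_eq
      by (rule exI[of _ D], rule exI[of _ E], rule exI[of _ nv], rule exI[of _ d],
          rule exI[of _ 0], rule exI[of _ 0], rule exI[of _ 0], rule exI[of _ 0]) (use I in simp)
    then show ?thesis using True unfolding S_loc_def by simp
  next
    case False
    have "\<forall>x. (0::real) = inner 0 x + 0" by simp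
    with False show ?thesis unfolding S_loc_def by (simp only: if_False mem_Collect_eq) blast
  qed
  then show ?thesis unfolding S_hat_def by simp
qed

lemma elem_indicator_in_E_h:
  assumes "E_h \<T> \<Omega> \<Omega>1 \<Omega>2 \<Gamma> \<beta> \<noteq> {}"
  shows "elem_indicator T \<in> E_h \<T> \<Omega> \<Omega>1 \<Omega>2 \<Gamma> \<beta>"
proof -
  have "S_hat \<T> \<Omega> \<Omega>1 \<Omega>2 \<Gamma> \<beta> \<noteq> {}" using assms unfolding E_h_def by blast
  then have zero: "(\<lambda>T x. 0) \<in> S_hat \<T> \<Omega> \<Omega>1 \<Omega>2 \<Gamma> \<beta>" by (rule zero_in_S_hat)
  have const: "elem_indicator T \<in> C_h \<T>" unfolding C_h_def elem_indicator_def by auto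
  show ?thesis
    unfolding E_h_def mem_Collect_eq by (rule bexI[OF _ zero], rule bexI[OF _ const]) simp
qed

section \<open>Edge integrals\<close>

definition edge_integrable :: "R2 set \<Rightarrow> (R2 \<Rightarrow> real) \<Rightarrow> bool" where
  "edge_integrable e g \<longleftrightarrow> (\<lambda>t. g ((1 - t) *\<^sub>R ep1 e + t *\<^sub>R ep2 e)) integrable_on {0..1}"

lemma edge_int_const: "edge_int e (\<lambda>x. c) = elen e * c"
  by (simp add: edge_int_def)

lemma edge_int_cmult: "edge_int e (\<lambda>x. c * g x) = c * edge_int e g"
  by (simp add: edge_int_def)

lemma edge_int_neg: "edge_int e (\<lambda>x. - g x) = - edge_int e g"
  by (simp add: edge_int_def)

lemma edge_int_add:
  assumes "edge_integrable e g" "edge_integrable e h"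
  shows "edge_int e (\<lambda>x. g x + h x) = edge_int e g + edge_int e h"
  using integral_add[OF assms[unfolded edge_integrable_def]] by (simp add: edge_int_def algebra_simps)

lemma edge_int_cong:
  assumes "card e = 2" "\<And>x. x \<in> convex hull e \<Longrightarrow> g x = h x"
  shows "edge_int e g = edge_int e h"
  unfolding edge_int_def using assms edge_point_in_hull by (metis (no_types, lifting) integral_cong)

lemma edge_integrable_cmult: "edge_integrable e g \<Longrightarrow> edge_integrable e (\<lambda>x. c * g x)"
  unfolding edge_integrable_def by (rule integrable_on_mult_right)

lemma edge_integrable_sum:
  "finite I \<Longrightarrow> (\<And>i. i \<in> I \<Longrightarrow> edge_integrable e (g i)) \<Longrightarrow> edge_integrable e (\<lambda>x. \<Sum>i\<in>I. g i x)"
  unfolding edge_integrable_def by (rule integrable_sum)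

lemma edge_integrable_continuous:
  assumes "continuous_on UNIV g"
  shows "edge_integrable e g"
proof -
  have "continuous_on {0..1} (\<lambda>t. g ((1 - t) *\<^sub>R ep1 e + t *\<^sub>R ep2 e))"
    by (rule continuous_on_compose2[OF assms _ subset_UNIV]) (intro continuous_intros)
  then show ?thesis unfolding edge_integrable_def by (rule integrable_continuous_interval)
qed

lemma edge_integrable_bounded_measurable:
  assumes "card e = 2" "g \<in> borel_measurable borel" "\<And>x. x \<in> convex hull e \<Longrightarrow> \<bar>g x\<bar> \<le> M"
  shows "edge_integrable e g"
proof -
  let ?\<gamma> = "\<lambda>t::real. (1 - t) *\<^sub>R ep1 e + t *\<^sub>R ep2 e"
  have "?\<gamma> \<in> borel_measurable borel"
    by (intro borel_measurable_continuous_onI continuous_intros)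
  then have "(\<lambda>t. g (?\<gamma> t)) \<in> borel_measurable borel"
    using assms(2) by (rule measurable_compose)
  then have meas: "(\<lambda>t. g (?\<gamma> t)) \<in> borel_measurable (lebesgue_on {0..1})"
    by (intro measurable_restrict_space1 measurable_completion) simp
  have bound: "AE t in lebesgue_on {0..1}. norm (g (?\<gamma> t)) \<le> M"
    using assms(1,3) edge_point_in_hull by (intro AE_I2) simp
  have "finite_measure (lebesgue_on {0..1::real})" by (rule finite_measure_lebesgue_on) simp
  then have "integrable (lebesgue_on {0..1}) (\<lambda>t. g (?\<gamma> t))"
    using bound meas by (rule finite_measure.integrable_const_bound)
  then show ?thesis unfolding edge_integrable_def by (rule integrable_on_lebesgue_on) simp
qed

lemma edge_integrable_jump:
  assumes "\<forall>T\<in>nbrs \<T> e. continuous_on UNIV (p T)"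
  shows "edge_integrable e (\<lambda>x. inner (jump \<T> p e x) v)"
  unfolding jump_def inner_sum_left using assms
  by (intro edge_integrable_continuous continuous_intros) auto

lemma edge_integrable_avgflux:
  assumes e: "card e = 2" and fin: "finite (nbrs \<T> e)"
    and p: "\<forall>T\<in>nbrs \<T> e. two_piece_affine (p T)"
    and \<beta>: "\<beta> \<in> borel_measurable borel" "\<forall>x\<in>convex hull e. \<bar>\<beta> x\<bar> \<le> M"
  shows "edge_integrable e (\<lambda>x. inner (avgflux \<T> \<beta> p e x) v)"
proof -
  have "edge_integrable e (\<lambda>x. \<beta> x * inner (grad (p T) x) v)" if T: "T \<in> nbrs \<T> e" for T
  proof -
    obtain G where G: "\<forall>x. norm (grad (p T) x) \<le> G" and m: "grad (p T) \<in> borel_measurable borel"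
      using two_piece_affine_grad p T by blast
    have "\<bar>\<beta> x * inner (grad (p T) x) v\<bar> \<le> M * (G * norm v)" if "x \<in> convex hull e" for x
    proof -
      have "\<bar>inner (grad (p T) x) v\<bar> \<le> G * norm v"
        using Cauchy_Schwarz_ineq2 G mult_right_mono norm_ge_zero order_trans by metis
      then show ?thesis using \<beta>(2) that by (simp add: abs_mult mult_mono')
    qed
    moreover have "(\<lambda>x. \<beta> x * inner (grad (p T) x) v) \<in> borel_measurable borel"
      using m \<beta>(1) by measurable
    ultimately show ?thesis by (intro edge_integrable_bounded_measurable[OF e])
  qed
  then show ?thesis
    unfolding avgflux_def inner_scaleR_left inner_sum_left
    by (intro edge_integrable_cmult edge_integrable_sum fin) simp
qed

section \<open>Local conservation\<close>

definition num_flux ::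
  "R2 set set \<Rightarrow> (R2 \<Rightarrow> real) \<Rightarrow> (R2 set \<Rightarrow> real) \<Rightarrow> (R2 set \<Rightarrow> R2 \<Rightarrow> real) \<Rightarrow> R2 set \<Rightarrow> R2 set \<Rightarrow> real"
  where "num_flux \<T> \<beta> \<sigma> p T e =
    - edge_int e (\<lambda>x. inner (avgflux \<T> \<beta> p e x) (outn T e))
    + \<sigma> e / elen e * edge_int e (\<lambda>x. inner (jump \<T> p e x) (outn T e))"

lemma grad_elem_indicator [simp]: "grad (elem_indicator T T') x = 0"
  using grad_eq_locally_affine[of UNIV x "elem_indicator T T'" 0 "if T' = T then 1 else 0"]
  by (simp add: elem_indicator_def)

lemma avgflux_elem_indicator [simp]: "avgflux \<T> \<beta> (elem_indicator T) e x = 0"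
  by (simp add: avgflux_def)

lemma jump_elem_indicator:
  "finite \<T> \<Longrightarrow> jump \<T> (elem_indicator T) e x = (if T \<in> nbrs \<T> e then outn T e else 0)"
  by (simp add: jump_def elem_indicator_def if_distrib[of "\<lambda>c. c *\<^sub>R _"] finite_nbrs
      cong: if_cong)

text \<open>The test function is constant on the edge, so penalising the edge mean of \<open>p\<close> on a boundary edge
  gives the same term as penalising \<open>p\<close> itself.\<close>
lemma bdry_penalty_elem_indicator:
  assumes e: "card e = 2" and T0: "nbrs \<T> e = {T0}"
  shows "1 / elen e * edge_int e (\<lambda>x. \<sigma> e * inner (jumpQ \<T> p e) (jumpQ \<T> (elem_indicator T) e))
       = (if T \<in> nbrs \<T> e then \<sigma> e / elen e * edge_int e (\<lambda>x. inner (jump \<T> p e x) (outn T e)) else 0)"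
proof -
  have len: "elen e \<noteq> 0" using elen_pos[OF e] by simp
  have avg: "avgval \<T> v e = v T0" for v :: "R2 set \<Rightarrow> R2 \<Rightarrow> real"
    by (simp add: avgval_def T0 fun_eq_iff)
  show ?thesis
  proof (cases "T0 = T")
    case True
    have unit: "inner (outn T e) (outn T e) = 1"
      using outn_unit_orthogonal(1)[OF e] by (simp add: norm_eq_1)
    have "jumpQ \<T> (elem_indicator T) e = outn T e"
      using len by (simp add: jumpQ_def Q0_def T0 True avg elem_indicator_def edge_int_const)
    moreover have "inner (jumpQ \<T> p e) (outn T e) = Q0 \<T> p e"
      by (simp add: jumpQ_def T0 True unit)
    moreover have "edge_int e (\<lambda>x. inner (jump \<T> p e x) (outn T e)) = elen e * Q0 \<T> p e"
      using len by (simp add: jump_def T0 True unit Q0_def avg)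
    ultimately show ?thesis using len T0 True by (simp add: edge_int_const)
  next
    case False
    then have "jumpQ \<T> (elem_indicator T) e = 0"
      by (simp add: jumpQ_def Q0_def T0 avg elem_indicator_def edge_int_const)
    then show ?thesis using False T0 by (simp add: edge_int_const)
  qed
qed

lemma a_h_elem_indicator:
  assumes mesh: "conforming_triangulation \<T> \<Omega>" and T: "T \<in> \<T>"
  shows "a_h \<T> \<beta> \<sigma> \<theta> p (elem_indicator T) = (\<Sum>e\<in>edges_of T. num_flux \<T> \<beta> \<sigma> p T e)"
proof -
  let ?w = "elem_indicator T"
  define F where "F e = edge_int e (\<lambda>x. inner (avgflux \<T> \<beta> p e x) (outn T e))" for e
  define P where "P e = \<sigma> e / elen e * edge_int e (\<lambda>x. inner (jump \<T> p e x) (outn T e))" for e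
  have fin: "finite \<T>" using mesh by (rule conforming_triangulation_finite)
  have consistency: "(\<Sum>e\<in>mesh_edges \<T>. edge_int e (\<lambda>x. inner (avgflux \<T> \<beta> p e x) (jump \<T> ?w e x)))
      = (\<Sum>e\<in>edges_of T. F e)"
    unfolding sum_edges_of_eq[OF mesh T]
    by (intro sum.cong refl) (simp add: jump_elem_indicator[OF fin] F_def edge_int_const)
  have int_penalty: "(\<Sum>e\<in>int_edges \<T>. 1 / elen e * edge_int e (\<lambda>x. \<sigma> e * inner (jump \<T> p e x) (jump \<T> ?w e x)))
      = (\<Sum>e\<in>int_edges \<T>. if T \<in> nbrs \<T> e then P e else 0)"
    by (intro sum.cong refl) (simp add: jump_elem_indicator[OF fin] P_def edge_int_const edge_int_cmult)
  have bdry_penalty: "(\<Sum>e\<in>bdry_edges \<T>. 1 / elen e * edge_int e (\<lambda>x. \<sigma> e * inner (jumpQ \<T> p e) (jumpQ \<T> ?w e)))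
      = (\<Sum>e\<in>bdry_edges \<T>. if T \<in> nbrs \<T> e then P e else 0)"
  proof (intro sum.cong refl)
    fix e
    assume e: "e \<in> bdry_edges \<T>"
    then have e2: "card e = 2" using mesh_edge_card unfolding bdry_edges_def by blast
    obtain T0 where T0: "nbrs \<T> e = {T0}"
      using e unfolding bdry_edges_def by (auto simp: card_1_singleton_iff)
    show "1 / elen e * edge_int e (\<lambda>x. \<sigma> e * inner (jumpQ \<T> p e) (jumpQ \<T> ?w e))
        = (if T \<in> nbrs \<T> e then P e else 0)"
      unfolding P_def by (rule bdry_penalty_elem_indicator[OF e2 T0])
  qed
  have "a_h \<T> \<beta> \<sigma> \<theta> p ?w = - (\<Sum>e\<in>edges_of T. F e) + (\<Sum>e\<in>edges_of T. P e)"
    unfolding a_h_def consistency int_penalty bdry_penalty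
    by (simp add: edge_int_const sum_edges_of_eq[OF mesh T] sum_mesh_edges_split[OF mesh])
  then show ?thesis
    unfolding num_flux_def F_def[symmetric] P_def[symmetric] by (simp add: sum.distrib sum_negf sum_subtractf)
qed

lemma rt_edge_flux:
  assumes e: "card e = 2"
    and ne: "norm (ne e) = 1" "\<forall>A\<in>e. \<forall>B\<in>e. inner (ne e) (B - A) = 0"
    and dof: "\<forall>x\<in>convex hull e. inner (u x) (ne e) = rt_dof \<T> \<beta> \<sigma> ne p e"
    and flux: "edge_integrable e (\<lambda>x. inner (avgflux \<T> \<beta> p e x) (ne e))"
    and jump: "edge_integrable e (\<lambda>x. inner (jump \<T> p e x) (ne e))"
  shows "edge_int e (\<lambda>x. inner (u x) (outn T e)) = num_flux \<T> \<beta> \<sigma> p T e"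
proof -
  define s where "s = inner (outn T e) (ne e)"
  have "outn T e = s *\<^sub>R ne e"
    unfolding s_def using outn_eq_scaled_normal[OF e ne(1)] ne(2) ep_props[OF e] by blast
  then have outn: "inner v (outn T e) = s * inner v (ne e)" for v by simp
  have "elen e \<noteq> 0" using elen_pos[OF e] by simp
  have "edge_int e (\<lambda>x. inner (u x) (outn T e)) = edge_int e (\<lambda>x. s * rt_dof \<T> \<beta> \<sigma> ne p e)"
    using dof by (intro edge_int_cong[OF e]) (simp add: outn)
  also have "\<dots> = s * edge_int e (\<lambda>x. - inner (avgflux \<T> \<beta> p e x) (ne e)
                        + \<sigma> e / elen e * inner (jump \<T> p e x) (ne e))"
    using \<open>elen e \<noteq> 0\<close> by (simp add: edge_int_const rt_dof_def)
  also have "\<dots> = s * (- edge_int e (\<lambda>x. inner (avgflux \<T> \<beta> p e x) (ne e))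
                        + \<sigma> e / elen e * edge_int e (\<lambda>x. inner (jump \<T> p e x) (ne e)))"
    using edge_int_add[OF edge_integrable_cmult[OF flux, of "- 1"] edge_integrable_cmult[OF jump, of "\<sigma> e / elen e"]]
    unfolding edge_int_cmult by simp
  also have "\<dots> = num_flux \<T> \<beta> \<sigma> p T e"
    unfolding num_flux_def outn edge_int_cmult by (simp add: algebra_simps)
  finally show ?thesis .
qed

section \<open>Integrals over the mesh\<close>

lemma square_integrable_imp_integrable:
  fixes f :: "'a \<Rightarrow> real"
  assumes "finite_measure M" "f \<in> borel_measurable M" "integrable M (\<lambda>x. (f x)\<^sup>2)"
  shows "integrable M f"
proof -
  have int: "integrable M (\<lambda>x. 1 + (f x)\<^sup>2)"
    by (rule Bochner_Integration.integrable_add[OF finite_measure.integrable_const[OF assms(1)] assms(3)])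
  have bound: "norm (f x) \<le> norm (1 + (f x)\<^sup>2)" for x
  proof -
    have "0 \<le> (\<bar>f x\<bar> - 1)\<^sup>2" by simp
    then show ?thesis by (simp add: power2_diff)
  qed
  show ?thesis by (rule Bochner_Integration.integrable_bound[OF int assms(2) AE_I2]) (rule bound)
qed

lemma set_integrable_lebesgue_cong_set:
  fixes f :: "'a::euclidean_space \<Rightarrow> real"
  assumes f: "set_integrable lebesgue A f" and AB: "AE x in lebesgue. x \<in> A \<longleftrightarrow> x \<in> B"
  shows "set_integrable lebesgue B f"
proof -
  have ae: "AE x in lebesgue. indicator A x *\<^sub>R f x = indicator B x *\<^sub>R f x"
    using AB by eventually_elim (simp split: split_indicator)
  moreover have "(\<lambda>x. indicator A x *\<^sub>R f x) \<in> borel_measurable lebesgue"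
    using f unfolding set_integrable_def by (rule borel_measurable_integrable)
  ultimately have meas: "(\<lambda>x. indicator B x *\<^sub>R f x) \<in> borel_measurable lebesgue"
    by (rule borel_measurable_AE[rotated])
  show ?thesis
    using integrable_cong_AE_imp[OF f[unfolded set_integrable_def] meas ae]
    unfolding set_integrable_def .
qed

lemma negligible_convex_hull_card_le_2:
  fixes S :: "R2 set"
  assumes "finite S" "card S \<le> 2"
  shows "negligible (convex hull S)"
proof -
  obtain a b where ab: "S \<subseteq> {a, b}"
  proof -
    have "card S = 0 \<or> card S = 1 \<or> card S = 2" using assms(2) by linarith
    then show ?thesis using assms(1) that by (auto simp: card_1_singleton_iff card_2_iff)
  qed
  define c where "c = (if a = b then axis 1 1 else rot90 (b - a))"
  have "c \<noteq> 0" by (simp add: c_def)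
  have "inner c b = inner c a"
    using inner_rot90[of "b - a" "b - a"] by (auto simp: c_def inner_diff_right)
  then have "convex hull S \<subseteq> {x. inner c x = inner c a}"
    using ab by (intro hull_minimal convex_hyperplane) auto
  then show ?thesis
    using negligible_hyperplane[of c] \<open>c \<noteq> 0\<close> negligible_subset by blast
qed

lemma conforming_overlap_negligible:
  assumes "conforming_triangulation \<T> \<Omega>" "T \<in> \<T>" "T' \<in> \<T>" "T \<noteq> T'"
  shows "negligible (convex hull T \<inter> convex hull T')"
proof -
  have tri: "is_triangle T" "is_triangle T'" using assms unfolding conforming_triangulation_def by auto
  then have fin: "finite T" "finite T'" by (simp_all add: finite_triangle)
  have "card (T \<inter> T') \<le> 2"
  proof (rule ccontr)
    assume "\<not> card (T \<inter> T') \<le> 2"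
    then have "card T \<le> card (T \<inter> T')" "card T' \<le> card (T \<inter> T')"
      using tri unfolding is_triangle_def by simp_all
    then have "T \<inter> T' = T" "T \<inter> T' = T'"
      using card_seteq fin by (metis Int_lower1, metis Int_lower2)
    then show False using assms(4) by simp
  qed
  then have "negligible (convex hull (T \<inter> T'))"
    using fin by (simp add: negligible_convex_hull_card_le_2)
  then show ?thesis using assms unfolding conforming_triangulation_def by simp
qed

lemma AE_in_closure_open_convex:
  fixes \<Omega> :: "'a::euclidean_space set"
  assumes "open \<Omega>" "convex \<Omega>"
  shows "AE x in lebesgue. x \<in> \<Omega> \<longleftrightarrow> x \<in> closure \<Omega>"
proof -
  have "frontier \<Omega> \<in> null_sets lebesgue"
    using negligible_convex_frontier[OF assms(2)] by (simp add: negligible_iff_null_sets)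
  moreover have "x \<notin> frontier \<Omega> \<longrightarrow> (x \<in> \<Omega> \<longleftrightarrow> x \<in> closure \<Omega>)" for x
    using assms(1) closure_subset by (auto simp: frontier_def interior_open)
  ultimately show ?thesis by (rule AE_not_in[THEN AE_mp, OF _ AE_I2])
qed

lemma sum_set_integral_triangles:
  fixes f :: "R2 \<Rightarrow> real"
  assumes dom: "convex_polygonal_domain \<Omega>" and mesh: "conforming_triangulation \<T> \<Omega>"
    and f: "integrable (lebesgue_on \<Omega>) f"
  shows "(\<Sum>T\<in>\<T>. LINT x:convex hull T|lebesgue. f x) = (LINT x:\<Omega>|lebesgue. f x)"
proof -
  obtain P where "polytope P" "\<Omega> = interior P" using dom unfolding convex_polygonal_domain_def by blast
  then have "open \<Omega>" "convex \<Omega>" by (simp_all add: polytope_imp_convex)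
  have fin: "finite \<T>" and tri: "\<And>T. T \<in> \<T> \<Longrightarrow> is_triangle T"
    and cover: "(\<Union>T\<in>\<T>. convex hull T) = closure \<Omega>"
    using mesh unfolding conforming_triangulation_def by auto
  have hull_sets: "convex hull T \<in> sets lebesgue" if "T \<in> \<T>" for T
    using finite_triangle[OF tri[OF that]]
    by (simp add: borel_closed compact_imp_closed finite_imp_compact_convex_hull)
  have \<Omega>_closure: "AE x in lebesgue. x \<in> \<Omega> \<longleftrightarrow> x \<in> closure \<Omega>"
    using \<open>open \<Omega>\<close> \<open>convex \<Omega>\<close> by (rule AE_in_closure_open_convex)
  have f_\<Omega>: "set_integrable lebesgue \<Omega> f"
    using f \<open>open \<Omega>\<close> by (simp add: set_integrable_def integrable_restrict_space)
  then have f_closure: "set_integrable lebesgue (closure \<Omega>) f"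
    using \<Omega>_closure by (rule set_integrable_lebesgue_cong_set)
  have "(\<Sum>T\<in>\<T>. LINT x:convex hull T|lebesgue. f x) = (LINT x:closure \<Omega>|lebesgue. f x)"
    unfolding cover[symmetric]
  proof (rule set_integral_finite_UN_AE[symmetric, OF fin _ hull_sets])
    fix T T' assume T: "T \<in> \<T>" "T' \<in> \<T>"
    show "AE x in lebesgue. x \<in> convex hull T \<and> x \<in> convex hull T' \<longrightarrow> T = T'"
    proof (cases "T = T'")
      case False
      then have "convex hull T \<inter> convex hull T' \<in> null_sets lebesgue"
        using conforming_overlap_negligible[OF mesh T] by (simp add: negligible_iff_null_sets)
      then show ?thesis by (rule AE_not_in[THEN AE_mp, OF _ AE_I2]) blast
    qed simp
  next
    fix T assume "T \<in> \<T>"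
    then show "set_integrable lebesgue (convex hull T) f"
      by (intro set_integrable_subset[OF f_closure hull_sets]) (auto simp flip: cover)
  qed
  also have "\<dots> = (LINT x:\<Omega>|lebesgue. f x)"
    using f_\<Omega> f_closure unfolding set_integrable_def
    by (intro set_integral_cong_set \<Omega>_closure)
      (simp_all add: set_borel_measurable_def borel_measurable_integrable)
  finally show ?thesis .
qed

lemma convex_polygonal_domain_lmeasurable: "convex_polygonal_domain \<Omega> \<Longrightarrow> \<Omega> \<in> lmeasurable"
  unfolding convex_polygonal_domain_def
  by (metis bounded_interior compact_imp_bounded lmeasurable_open open_interior polytope_imp_compact)

lemma l2ip_elem_indicator:
  assumes "finite \<T>" "T \<in> \<T>"
  shows "l2ip \<T> f (elem_indicator T) = (LINT x:convex hull T|lebesgue. f x)"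
proof -
  have "l2ip \<T> f (elem_indicator T) = (\<Sum>T'\<in>\<T>. if T' = T then (LINT x:convex hull T|lebesgue. f x) else 0)"
    unfolding l2ip_def elem_indicator_def by (intro sum.cong refl) simp
  then show ?thesis using assms by simp
qed

lemma conforming_hull_subset_closure:
  "conforming_triangulation \<T> \<Omega> \<Longrightarrow> T \<in> \<T> \<Longrightarrow> convex hull T \<subseteq> closure \<Omega>"
  unfolding conforming_triangulation_def by blast

lemma rt_mesh_edge_flux:
  assumes mesh: "conforming_triangulation \<T> \<Omega>" and p: "p \<in> E_h \<T> \<Omega> \<Omega>1 \<Omega>2 \<Gamma> \<beta>"
    and \<beta>: "\<beta> \<in> borel_measurable borel" "\<forall>x\<in>closure \<Omega>. \<bar>\<beta> x\<bar> \<le> M"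
    and normals: "\<forall>e\<in>mesh_edges \<T>. norm (ne e) = 1 \<and> (\<forall>A\<in>e. \<forall>B\<in>e. inner (ne e) (B - A) = 0)"
    and udof: "\<forall>e\<in>mesh_edges \<T>. \<forall>T\<in>nbrs \<T> e. \<forall>x\<in>convex hull e.
                 inner (u T x) (ne e) = rt_dof \<T> \<beta> \<sigma> ne p e"
    and e: "e \<in> mesh_edges \<T>" "T \<in> nbrs \<T> e"
  shows "edge_int e (\<lambda>x. inner (u T x) (outn T e)) = num_flux \<T> \<beta> \<sigma> p T e"
proof (rule rt_edge_flux)
  show e2: "card e = 2" using mesh_edge_card[OF e(1)] .
  show "norm (ne e) = 1" "\<forall>A\<in>e. \<forall>B\<in>e. inner (ne e) (B - A) = 0" using normals e(1) by auto
  show "\<forall>x\<in>convex hull e. inner (u T x) (ne e) = rt_dof \<T> \<beta> \<sigma> ne p e" using udof e by blast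
  have fin: "finite (nbrs \<T> e)"
    using conforming_triangulation_finite[OF mesh] by (rule finite_nbrs)
  have pw: "\<forall>T'\<in>nbrs \<T> e. two_piece_affine (p T')"
    using E_h_two_piece_affine[OF p] unfolding nbrs_def by blast
  have "T \<in> \<T>" "e \<subseteq> T"
    using e(2) unfolding nbrs_def by auto
  then have "convex hull e \<subseteq> closure \<Omega>"
    using conforming_hull_subset_closure[OF mesh] hull_mono by blast
  then show "edge_integrable e (\<lambda>x. inner (avgflux \<T> \<beta> p e x) (ne e))"
    using \<beta>(2) by (intro edge_integrable_avgflux[OF e2 fin pw \<beta>(1)]) blast
  show "edge_integrable e (\<lambda>x. inner (jump \<T> p e x) (ne e))"
    using pw two_piece_affine_continuous by (intro edge_integrable_jump) blast
qed

lemma rt_interior_flux_cancel: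
  assumes u: "u \<in> RT0 \<T>" and e: "e \<in> int_edges \<T>" "T \<in> nbrs \<T> e" "T' \<in> nbrs \<T> e" "T \<noteq> T'"
  shows "edge_int e (\<lambda>x. inner (u T x) (outn T e)) + edge_int e (\<lambda>x. inner (u T' x) (outn T' e)) = 0"
proof -
  have e2: "card e = 2" using e(1) mesh_edge_card unfolding int_edges_def by blast
  have "\<forall>x\<in>convex hull e. inner (u T x) (outn T e) + inner (u T' x) (outn T' e) = 0"
    using u e unfolding RT0_def by blast
  then have "edge_int e (\<lambda>x. inner (u T' x) (outn T' e)) = edge_int e (\<lambda>x. - inner (u T x) (outn T e))"
    by (intro edge_int_cong[OF e2]) (simp add: add_eq_0_iff)
  then show ?thesis by (simp add: edge_int_neg)
qed

lemma local_conservation: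
  assumes mesh: "conforming_triangulation \<T> \<Omega>" and p: "p \<in> E_h \<T> \<Omega> \<Omega>1 \<Omega>2 \<Gamma> \<beta>"
    and \<beta>: "\<beta> \<in> borel_measurable borel" "\<forall>x\<in>closure \<Omega>. \<bar>\<beta> x\<bar> \<le> M"
    and normals: "\<forall>e\<in>mesh_edges \<T>. norm (ne e) = 1 \<and> (\<forall>A\<in>e. \<forall>B\<in>e. inner (ne e) (B - A) = 0)"
    and udof: "\<forall>e\<in>mesh_edges \<T>. \<forall>T\<in>nbrs \<T> e. \<forall>x\<in>convex hull e.
                 inner (u T x) (ne e) = rt_dof \<T> \<beta> \<sigma> ne p e"
    and scheme: "\<forall>w\<in>E_h \<T> \<Omega> \<Omega>1 \<Omega>2 \<Gamma> \<beta>. a_h \<T> \<beta> \<sigma> \<theta> p w = l2ip \<T> f w"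
    and T: "T \<in> \<T>"
  shows "(\<Sum>e\<in>edges_of T. edge_int e (\<lambda>x. inner (u T x) (outn T e))) = (LINT x:convex hull T|lebesgue. f x)"
proof -
  have "(\<Sum>e\<in>edges_of T. edge_int e (\<lambda>x. inner (u T x) (outn T e)))
      = (\<Sum>e\<in>edges_of T. num_flux \<T> \<beta> \<sigma> p T e)"
    using rt_mesh_edge_flux[OF mesh p \<beta> normals udof] edges_of_eq[OF T] by simp
  also have "\<dots> = a_h \<T> \<beta> \<sigma> \<theta> p (elem_indicator T)"
    by (rule a_h_elem_indicator[OF mesh T, symmetric])
  also have "\<dots> = l2ip \<T> f (elem_indicator T)"
    using scheme elem_indicator_in_E_h[of \<T> \<Omega> \<Omega>1 \<Omega>2 \<Gamma> \<beta> T] p by blast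
  also have "\<dots> = (LINT x:convex hull T|lebesgue. f x)"
    by (rule l2ip_elem_indicator[OF conforming_triangulation_finite[OF mesh] T])
  finally show ?thesis .
qed

theorem mainTheorem3:
  fixes \<Omega> \<Omega>1 \<Omega>2 \<Gamma> :: "R2 set" and \<T> :: "R2 set set"
    and \<beta> f :: "R2 \<Rightarrow> real" and \<sigma> :: "R2 set \<Rightarrow> real" and \<theta> :: real
    and ne :: "R2 set \<Rightarrow> R2"
    and p :: "R2 set \<Rightarrow> R2 \<Rightarrow> real" and u :: "R2 set \<Rightarrow> R2 \<Rightarrow> R2"
  assumes dom: "convex_polygonal_domain \<Omega>"
    and sub: "open \<Omega>1" "open \<Omega>2" "\<Omega>1 \<inter> \<Omega>2 = {}" "\<Omega>1 \<inter> \<Gamma> = {}" "\<Omega>2 \<inter> \<Gamma> = {}"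
             "\<Omega> = \<Omega>1 \<union> \<Gamma> \<union> \<Omega>2"
    and curve: "C2_curve \<Omega> \<Gamma>"
    and beta_C1: "\<forall>S\<in>{\<Omega>1, \<Omega>2}. \<exists>g :: R2 \<Rightarrow> R2. continuous_on S g \<and>
                    (\<forall>x\<in>S. (\<beta> has_derivative (\<lambda>h. inner (g x) h)) (at x))"
    and beta_meas: "\<beta> \<in> borel_measurable borel"
    and beta_bnd: "\<exists>lo hi. 0 < lo \<and> (\<forall>x\<in>closure \<Omega>. lo < \<beta> x \<and> \<beta> x < hi)"
    and mesh: "conforming_triangulation \<T> \<Omega>"
    and cut: "\<forall>T\<in>\<T>. interface_elem \<Gamma> T \<longrightarrow> card (frontier (convex hull T) \<inter> \<Gamma>) = 2"
    and normals: "\<forall>e\<in>mesh_edges \<T>. norm (ne e) = 1 \<and> (\<forall>A\<in>e. \<forall>B\<in>e. inner (ne e) (B - A) = 0)"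
    and theta: "\<theta> \<in> {-1, 0, 1}"
    and sigma: "\<forall>e\<in>mesh_edges \<T>. 0 < \<sigma> e"
    and f_L2: "f \<in> borel_measurable (lebesgue_on \<Omega>)" "integrable (lebesgue_on \<Omega>) (\<lambda>x. (f x)\<^sup>2)"
    and ph: "p \<in> E_h \<T> \<Omega> \<Omega>1 \<Omega>2 \<Gamma> \<beta>"
    and scheme: "\<forall>w\<in>E_h \<T> \<Omega> \<Omega>1 \<Omega>2 \<Gamma> \<beta>. a_h \<T> \<beta> \<sigma> \<theta> p w = l2ip \<T> f w"
    and uRT: "u \<in> RT0 \<T>"
    and udof: "\<forall>e\<in>mesh_edges \<T>. \<forall>T\<in>nbrs \<T> e. \<forall>x\<in>convex hull e.
                 inner (u T x) (ne e) = rt_dof \<T> \<beta> \<sigma> ne p e"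
  shows "(\<forall>T\<in>\<T>. (\<Sum>e\<in>edges_of T. edge_int e (\<lambda>x. inner (u T x) (outn T e)))
                  = (LINT x:convex hull T|lebesgue. f x))
       \<and> (\<Sum>e\<in>bdry_edges \<T>. \<Sum>T\<in>nbrs \<T> e. edge_int e (\<lambda>x. inner (u T x) (outn T e)))
           = (LINT x:\<Omega>|lebesgue. f x)"
proof -
  obtain lo M where "0 < lo" "\<forall>x\<in>closure \<Omega>. lo < \<beta> x \<and> \<beta> x < M" using beta_bnd by blast
  then have "\<forall>x\<in>closure \<Omega>. \<bar>\<beta> x\<bar> \<le> M" by fastforce
  note local = local_conservation[OF mesh ph beta_meas this normals udof scheme]
  have "integrable (lebesgue_on \<Omega>) f"
    using square_integrable_imp_integrable convex_polygonal_domain_lmeasurable[OF dom]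
      finite_measure_lebesgue_on f_L2 by blast
  then have "(\<Sum>T\<in>\<T>. \<Sum>e\<in>edges_of T. edge_int e (\<lambda>x. inner (u T x) (outn T e)))
      = (LINT x:\<Omega>|lebesgue. f x)"
    using local sum_set_integral_triangles[OF dom mesh] by simp
  moreover have "(\<Sum>T\<in>\<T>. \<Sum>e\<in>edges_of T. edge_int e (\<lambda>x. inner (u T x) (outn T e)))
      = (\<Sum>e\<in>bdry_edges \<T>. \<Sum>T\<in>nbrs \<T> e. edge_int e (\<lambda>x. inner (u T x) (outn T e)))"
    using rt_interior_flux_cancel[OF uRT] by (rule sum_elements_edges_eq_bdry[OF mesh])
  ultimately show ?thesis using local by simp
qed

end
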